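(* Let $k\ge 2$ and $p\in\mathbb{S}^n$, and let $\Sigma^k\subset\mathbb{S}^n$ be a minimal submanifold. Then: (i) $\mathrm{div}_\Sigma\Phi_p\le 1$ on $\Sigma\setminus\{-p\}$ and $\mathrm{div}_\Sigma\Psi_p\le 1$ on $\Sigma\setminus\{p\}$. (ii) $\Psi_p=(\psi\circ\mathbf{d}_p)\nabla\mathbf{d}_p$, where $\psi(r):=\dfrac{I_k(r)-I_k(\pi)}{\sin^{k-1}r}$. If moreover $k=2j$ is even, then \[\psi(r)=\sum_{i=1}^j\frac{-a_i\sin r}{(1-\cos r)^i},\qquad a_1:=\frac{1}{2j-1},\quad a_{i+1}:=\frac{2(j-i)}{2j-(i+1)}a_i\ (i=1,\dots,j-1).\]
   Context: $\mathbb{S}^n$ is the unit round sphere with Levi-Civita connection $\nabla$; $\mathbf{d}_q$ is geodesic distance from $q$. $I_k(r)=\int_0^r\sin^{k-1}s\,ds$. Define $\varphi(t)=I_k(t)\sin^{1-k}t$ for $t\in(0,\pi)$ and $\varphi(0)=0$. For $q\in\mathbb{S}^n$, $\Phi_q:=(\varphi\circ\mathbf{d}_q)\nabla\mathbf{d}_q$ on $\mathbb{S}^n\setminus\{-q\}$ and $\Psi_q:=\Phi_{-q}$ on $\mathbb{S}^n\setminus\{q\}$. $\mathrm{div}_\Sigma$ denotes the divergence along $\Sigma$. *)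

theory Defs
  imports "HOL-Analysis.Analysis"
begin

text \<open>The unit sphere S^n is the unit sphere of a Euclidean space 'a (DIM('a) = n+1).\<close>

definition I_k :: "nat \<Rightarrow> real \<Rightarrow> real" where
  "I_k k r = integral {0..r} (\<lambda>s. sin s ^ (k - 1))"

definition phi_k :: "nat \<Rightarrow> real \<Rightarrow> real" where
  "phi_k k t = (if t = 0 then 0 else I_k k t / sin t ^ (k - 1))"

definition psi_k :: "nat \<Rightarrow> real \<Rightarrow> real" where
  "psi_k k r = (I_k k r - I_k k pi) / sin r ^ (k - 1)"

definition sdist :: "'a::euclidean_space \<Rightarrow> 'a \<Rightarrow> real" where
  "sdist q x = arccos (x \<bullet> q)"

text \<open>Spherical gradient of sdist q at x (x a unit vector, x \<noteq> q, -q):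
  -(q - (x.q) x) / |q - (x.q) x|, where |q - (x.q) x| = sin (sdist q x).\<close>
definition grad_sdist :: "'a::euclidean_space \<Rightarrow> 'a \<Rightarrow> 'a" where
  "grad_sdist q x = (1 / sin (sdist q x)) *\<^sub>R ((x \<bullet> q) *\<^sub>R x - q)"

definition Phi :: "nat \<Rightarrow> 'a::euclidean_space \<Rightarrow> 'a \<Rightarrow> 'a" where
  "Phi k q x = phi_k k (sdist q x) *\<^sub>R grad_sdist q x"

definition Psi :: "nat \<Rightarrow> 'a::euclidean_space \<Rightarrow> 'a \<Rightarrow> 'a" where
  "Psi k q = Phi k (- q)"

fun a_coef :: "nat \<Rightarrow> nat \<Rightarrow> real" where
  "a_coef j 0 = 0"
| "a_coef j (Suc 0) = 1 / (2 * real j - 1)"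
| "a_coef j (Suc (Suc i)) =
     2 * (real j - real (Suc i)) / (2 * real j - real (Suc (Suc i))) * a_coef j (Suc i)"

definition tangent_onb :: "('k::euclidean_space \<Rightarrow> 'a::euclidean_space) \<Rightarrow> ('k \<Rightarrow> 'k) \<Rightarrow> bool" where
  "tangent_onb L v \<longleftrightarrow>
     (\<forall>b\<in>Basis. \<forall>c\<in>Basis. L (v b) \<bullet> L (v c) = (if b = c then 1 else 0))"

text \<open>Component of z normal to Sigma inside the sphere at the point x: remove the components
  along the tangent frame L (v c) and along the position vector x.\<close>
definition normal_part ::
  "('k::euclidean_space \<Rightarrow> 'a::euclidean_space) \<Rightarrow> ('k \<Rightarrow> 'k) \<Rightarrow> 'a \<Rightarrow> 'a \<Rightarrow> 'a" where
  "normal_part L v x z = z - (\<Sum>c\<in>Basis. (z \<bullet> L (v c)) *\<^sub>R L (v c)) - (z \<bullet> x) *\<^sub>R x"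

text \<open>A k-dimensional (k = DIM('k)) minimal submanifold of the unit sphere, given locally
  by a C^2 immersion f : U \<rightarrow> S^n, U open in R^k, with vanishing mean curvature
  H = sum_i II(e_i,e_i) (second fundamental form in S^n).\<close>
definition minimal_immersion :: "'k::euclidean_space set \<Rightarrow> ('k \<Rightarrow> 'a::euclidean_space) \<Rightarrow> bool" where
  "minimal_immersion U f \<longleftrightarrow>
     open U \<and> (\<forall>u\<in>U. norm (f u) = 1) \<and>
     (\<exists>Df :: 'k \<Rightarrow> ('k \<Rightarrow>\<^sub>L 'a). \<exists>D2f :: 'k \<Rightarrow> ('k \<Rightarrow>\<^sub>L ('k \<Rightarrow>\<^sub>L 'a)).
        (\<forall>u\<in>U. (f has_derivative blinfun_apply (Df u)) (at u)) \<and>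
        (\<forall>u\<in>U. (Df has_derivative blinfun_apply (D2f u)) (at u)) \<and>
        continuous_on U D2f \<and>
        (\<forall>u\<in>U. inj (blinfun_apply (Df u))) \<and>
        (\<forall>u\<in>U. \<forall>v. tangent_onb (blinfun_apply (Df u)) v \<longrightarrow>
            (\<Sum>b\<in>Basis. normal_part (blinfun_apply (Df u)) v (f u)
                            (blinfun_apply (blinfun_apply (D2f u) (v b)) (v b))) = 0))"

text \<open>div_Sigma X at the point f u, computed in the orthonormal tangent frame
  e_b = Df(u)(v b):  sum_b < nabla_{e_b} X, e_b >, with nabla_{e_b} X = D(X o f)(u)(v b)
  (tangential components agree with the Levi-Civita connection of S^n).\<close>
definition div_Sigma ::
  "('a::euclidean_space \<Rightarrow> 'a) \<Rightarrow> ('k::euclidean_space \<Rightarrow> 'a) \<Rightarrow> 'k \<Rightarrow> ('k \<Rightarrow> 'k) \<Rightarrow> real" where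
  "div_Sigma X f u v =
     (\<Sum>b\<in>Basis. frechet_derivative (X \<circ> f) (at u) (v b) \<bullet> frechet_derivative f (at u) (v b))"

end

theory Submission
  imports Defs
begin

text \<open>
  Write c = <x, q> = cos d. Then Phi_q(x) = H(c) (c x - q) with H = Phi_profile, where
  H(cos d) = I_k(d) / sin^k d satisfies (1 - c^2) H'(c) = k c H(c) - 1. For an orthonormal
  tangent frame e_1, ..., e_k of Sigma at x (all orthogonal to x) and S = sum_b <e_b, q>^2 this gives
    div_Sigma Phi_q = k c H(c) - H'(c) S = k c H(c) + (1 - k c H(c)) S / (1 - c^2).
  Bessel's inequality for the orthonormal system e_1, ..., e_k, x yields S <= 1 - c^2, and
  k c H(c) <= 1 is the comparison k cos d I_k(d) <= sin^k d; hence the divergence is at most 1.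
  At x = q, H extends continuously by 1/k and the divergence is exactly 1.

  For (ii), I_k(pi - d) = I_k(pi) - I_k(d). For k = 2j the polynomial P = psi_poly,
  P(c) = sum_i a_i (1 + c)^j (1 - c)^(j - i), satisfies P' = (1 - c^2)^(j - 1), so -P(cos r) is
  the primitive of sin^(2j - 1) vanishing at pi.
\<close>

lemma continuous_on_I_k: "continuous_on {0..b} (I_k k)"
  unfolding I_k_def[abs_def]
  by (intro indefinite_integral_continuous_1 integrable_continuous_real continuous_intros)

lemma I_k_has_real_derivative:
  assumes "0 < r"
  shows "(I_k k has_real_derivative sin r ^ (k - 1)) (at r)"
proof -
  have "((\<lambda>x. integral {0..x} (\<lambda>s. sin s ^ (k - 1))) has_real_derivative sin r ^ (k - 1))
          (at r within {0..r + 1})"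
    using assms by (intro integral_has_real_derivative continuous_intros) auto
  moreover have "at r within {0..r + 1} = at r"
    using assms by (intro at_within_Icc_at) auto
  ultimately show ?thesis
    unfolding I_k_def[abs_def] by simp
qed

lemma I_k_0 [simp]: "I_k k 0 = 0"
  unfolding I_k_def by simp

lemma I_k_nonneg: "0 \<le> r \<Longrightarrow> r \<le> pi \<Longrightarrow> 0 \<le> I_k k r"
  unfolding I_k_def
  by (intro integral_nonneg) (auto intro!: integrable_continuous_real continuous_intros simp: sin_ge_zero)

lemma I_k_mult_cos_le:
  assumes "0 \<le> d" "d \<le> pi"
  shows "real k * cos d * I_k k d \<le> sin d ^ k"
proof -
  define F where "F x = sin x ^ k - real k * cos x * I_k k x" for x
  have "F 0 \<le> F d"
  proof (rule DERIV_nonneg_imp_increasing_open[OF assms(1)])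
    fix x assume x: "0 < x" "x < d"
    have dI: "(I_k k has_real_derivative sin x ^ (k - 1)) (at x)"
      using x by (intro I_k_has_real_derivative) auto
    have "(F has_real_derivative real k * sin x * I_k k x) (at x)"
      unfolding F_def[abs_def]
      by (rule derivative_eq_intros dI refl | simp add: algebra_simps)+
    moreover have "0 \<le> real k * sin x * I_k k x"
      using x assms by (intro mult_nonneg_nonneg I_k_nonneg sin_ge_zero) auto
    ultimately show "\<exists>y. (F has_real_derivative y) (at x) \<and> 0 \<le> y" by blast
  qed (use assms in \<open>auto simp: F_def
         intro!: continuous_intros continuous_on_subset[OF continuous_on_I_k]\<close>)
  then show ?thesis
    by (cases k) (simp_all add: F_def)
qed

lemma sin_pow_le_I_k:
  assumes "k \<ge> 1" "0 \<le> d" "d \<le> pi"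
  shows "sin d ^ k \<le> real k * I_k k d"
proof -
  define F where "F x = real k * I_k k x - sin x ^ k" for x
  have "F 0 \<le> F d"
  proof (rule DERIV_nonneg_imp_increasing_open[OF assms(2)])
    fix x assume x: "0 < x" "x < d"
    have dI: "(I_k k has_real_derivative sin x ^ (k - 1)) (at x)"
      using x by (intro I_k_has_real_derivative) auto
    have "(F has_real_derivative real k * sin x ^ (k - 1) * (1 - cos x)) (at x)"
      unfolding F_def[abs_def]
      by (rule derivative_eq_intros dI refl | simp add: algebra_simps)+
    moreover have "0 \<le> real k * sin x ^ (k - 1) * (1 - cos x)"
      using x assms by (intro mult_nonneg_nonneg zero_le_power sin_ge_zero) auto
    ultimately show "\<exists>y. (F has_real_derivative y) (at x) \<and> 0 \<le> y" by blast
  qed (use assms in \<open>auto simp: F_def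
         intro!: continuous_intros continuous_on_subset[OF continuous_on_I_k]\<close>)
  then show ?thesis
    using assms by (simp add: F_def zero_power)
qed

lemma I_k_pi_minus:
  assumes "0 \<le> d" "d \<le> pi"
  shows "I_k k (pi - d) = I_k k pi - I_k k d"
proof -
  define J where "J x = I_k k (pi - x) + I_k k x" for x
  have "J d = J 0"
  proof (rule DERIV_isconst2[of 0 pi])
    show "continuous_on {0..pi} J"
      unfolding J_def[abs_def]
      by (intro continuous_intros continuous_on_compose2[OF continuous_on_I_k[of pi]] continuous_on_I_k) auto
  next
    fix x assume x: "0 < x" "x < pi"
    have "(J has_real_derivative sin (pi - x) ^ (k - 1) * (-1) + sin x ^ (k - 1)) (at x)"
      unfolding J_def[abs_def] using x
      by (intro DERIV_add DERIV_chain2[OF I_k_has_real_derivative] I_k_has_real_derivative)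
         (auto intro!: derivative_eq_intros)
    then show "(J has_real_derivative 0) (at x)" by simp
  qed (use assms in auto)
  then show ?thesis by (simp add: J_def)
qed

definition Phi_profile :: "nat \<Rightarrow> real \<Rightarrow> real" where
  "Phi_profile k c = phi_k k (arccos c) / sin (arccos c)"

lemma Phi_eq_Phi_profile: "Phi k q x = Phi_profile k (x \<bullet> q) *\<^sub>R ((x \<bullet> q) *\<^sub>R x - q)"
  unfolding Phi_def grad_sdist_def sdist_def Phi_profile_def by simp

lemma Phi_profile_cos:
  assumes "k \<ge> 1" "0 < d" "d < pi"
  shows "Phi_profile k (cos d) = I_k k d / sin d ^ k"
proof -
  have "sin d > 0"
    using assms by (intro sin_gt_zero) auto
  moreover obtain m where "k = Suc m"
    using assms by (cases k) auto
  ultimately show ?thesis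
    using assms unfolding Phi_profile_def phi_k_def by (simp add: arccos_cos)
qed

lemma I_k_div_sin_pow_has_derivative:
  assumes "k \<ge> 1" "0 < d" "d < pi"
  shows "((\<lambda>d. I_k k d / sin d ^ k) has_real_derivative
           1 / sin d - real k * I_k k d * cos d / sin d ^ (k + 1)) (at d)"
proof -
  have s: "sin d > 0"
    using assms by (intro sin_gt_zero) auto
  obtain m where k: "k = Suc m"
    using assms by (cases k) auto
  have dI: "(I_k k has_real_derivative sin d ^ (k - 1)) (at d)"
    using assms by (intro I_k_has_real_derivative) auto
  have "((\<lambda>d. I_k k d / sin d ^ k) has_real_derivative
     (sin d ^ (k - 1) * sin d ^ k - I_k k d * (real k * sin d ^ (k - 1) * cos d))
       / (sin d ^ k * sin d ^ k)) (at d)"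
    by (rule derivative_eq_intros dI refl | use s in simp)+
  also have "(sin d ^ (k - 1) * sin d ^ k - I_k k d * (real k * sin d ^ (k - 1) * cos d))
       / (sin d ^ k * sin d ^ k)
     = 1 / sin d - real k * I_k k d * cos d / sin d ^ (k + 1)"
    using s unfolding k by (simp add: field_simps)
  finally show ?thesis .
qed

lemma Phi_profile_has_derivative:
  assumes "k \<ge> 1" "-1 < c" "c < 1"
  shows "(Phi_profile k has_real_derivative (real k * Phi_profile k c * c - 1) / (1 - c\<^sup>2)) (at c)"
proof -
  define d where "d = arccos c"
  have d: "0 < d" "d < pi"
    using assms arccos_lt_bounded unfolding d_def by auto
  have cd: "cos d = c" and sd: "sin d = sqrt (1 - c\<^sup>2)"
    using assms unfolding d_def by (simp_all add: sin_arccos)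
  have s: "sin d > 0"
    using d by (intro sin_gt_zero) auto
  have "((\<lambda>y. I_k k (arccos y) / sin (arccos y) ^ k) has_real_derivative
          (1 / sin d - real k * I_k k d * cos d / sin d ^ (k + 1)) * inverse (- sqrt (1 - c\<^sup>2))) (at c)"
    using DERIV_chain2[OF I_k_div_sin_pow_has_derivative[OF assms(1) d, unfolded d_def]
        DERIV_arccos[OF assms(2,3)]]
    unfolding d_def by simp
  then have "(Phi_profile k has_real_derivative
          (1 / sin d - real k * I_k k d * cos d / sin d ^ (k + 1)) * inverse (- sqrt (1 - c\<^sup>2))) (at c)"
  proof (rule has_field_derivative_transform_within_open[where S = "{-1<..<1}"])
    fix y :: real assume "y \<in> {-1<..<1}"
    then show "I_k k (arccos y) / sin (arccos y) ^ k = Phi_profile k y"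
      using Phi_profile_cos[OF assms(1), of "arccos y"] arccos_lt_bounded by auto
  qed (use assms in auto)
  moreover have "(1 / sin d - real k * I_k k d * cos d / sin d ^ (k + 1)) * inverse (- sqrt (1 - c\<^sup>2))
      = (real k * Phi_profile k c * c - 1) / (1 - c\<^sup>2)"
  proof -
    have e: "1 - c\<^sup>2 = sin d ^ 2"
      using cd by (simp add: sin_squared_eq)
    have H: "Phi_profile k c = I_k k d / sin d ^ k"
      using Phi_profile_cos[OF assms(1) d] cd by simp
    show ?thesis
      unfolding sd[symmetric] e H cd using s by (simp add: field_simps power2_eq_square)
  qed
  ultimately show ?thesis by simp
qed

lemma Phi_profile_mult_le:
  assumes "k \<ge> 1" "-1 < c" "c < 1"
  shows "real k * Phi_profile k c * c \<le> 1"
proof -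
  define d where "d = arccos c"
  have d: "0 < d" "d < pi" and cd: "cos d = c"
    using assms arccos_lt_bounded unfolding d_def by auto
  have H: "Phi_profile k c = I_k k d / sin d ^ k"
    using Phi_profile_cos[OF assms(1) d] cd by simp
  have "sin d > 0"
    using d by (intro sin_gt_zero) auto
  moreover have "real k * cos d * I_k k d \<le> sin d ^ k"
    using d by (intro I_k_mult_cos_le) auto
  ultimately show ?thesis
    unfolding H using cd by (simp add: field_simps)
qed

lemma Phi_profile_ge:
  assumes "k \<ge> 1" "-1 < c" "c < 1"
  shows "1 / real k \<le> Phi_profile k c"
proof -
  define d where "d = arccos c"
  have d: "0 < d" "d < pi" and cd: "cos d = c"
    using assms arccos_lt_bounded unfolding d_def by auto
  have "sin d ^ k > 0"
    using d by (intro zero_less_power sin_gt_zero) auto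
  moreover have "sin d ^ k \<le> real k * I_k k d"
    using assms d by (intro sin_pow_le_I_k) auto
  ultimately show ?thesis
    using Phi_profile_cos[OF assms(1) d] cd assms by (simp add: field_simps)
qed

text \<open>Phi_profile k 1 = 0 is a junk value; the continuous extension to the pole c = 1 is 1/k.\<close>
definition Phi_profile_ext :: "nat \<Rightarrow> real \<Rightarrow> real" where
  "Phi_profile_ext k c = (if c = 1 then 1 / real k else Phi_profile k c)"

lemma continuous_Phi_profile_ext:
  assumes "k \<ge> 1"
  shows "continuous (at 1 within {-1..1}) (Phi_profile_ext k)"
  unfolding continuous_within
proof (rule tendsto_sandwich[where f = "\<lambda>_. 1 / real k" and h = "\<lambda>c. 1 / (real k * c)"])
  have near_1: "\<forall>\<^sub>F c in nhds 1. c \<in> {0::real<..}"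
    by (intro eventually_nhds_in_open) auto
  have "\<forall>\<^sub>F c in at (1::real) within {-1..1}. 0 < c \<and> c < 1"
    unfolding eventually_at_filter by (rule eventually_mono[OF near_1]) auto
  then show "\<forall>\<^sub>F c in at 1 within {-1..1}. 1 / real k \<le> Phi_profile_ext k c"
    and "\<forall>\<^sub>F c in at 1 within {-1..1}. Phi_profile_ext k c \<le> 1 / (real k * c)"
    by (eventually_elim, use assms Phi_profile_ge Phi_profile_mult_le in
          \<open>auto simp: Phi_profile_ext_def field_simps\<close>)+
  have "((\<lambda>c. 1 / (real k * c)) \<longlongrightarrow> 1 / (real k * 1)) (at 1 within {-1..1})"
    using assms by (intro tendsto_intros) auto
  then show "((\<lambda>c. 1 / (real k * c)) \<longlongrightarrow> Phi_profile_ext k 1) (at 1 within {-1..1})"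
    by (simp add: Phi_profile_ext_def)
qed (simp add: Phi_profile_ext_def)

lemma has_derivative_scaleR_vanishing:
  fixes g :: "'a::real_normed_vector \<Rightarrow> 'b::real_normed_vector" and a :: "'a \<Rightarrow> real"
  assumes g: "(g has_derivative G) (at x)" and g_zero: "g x = 0" and a: "continuous (at x) a"
  shows "((\<lambda>y. a y *\<^sub>R g y) has_derivative (\<lambda>h. a x *\<^sub>R G h)) (at x)"
proof -
  have G: "bounded_linear G"
    using g by (rule has_derivative_bounded_linear)
  obtain K where K: "\<And>h. norm (G h) \<le> norm h * K"
    using bounded_linear.bounded[OF G] by blast
  define N where "N y = norm (g y - g x - G (y - x)) / norm (y - x)" for y
  have N: "(N \<longlongrightarrow> 0) (at x)"
    using g unfolding has_derivative_iff_norm N_def by simp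
  have a_diff: "((\<lambda>y. a y - a x) \<longlongrightarrow> 0) (at x)"
    using a unfolding continuous_at by (simp add: LIM_zero)
  show ?thesis
  proof (rule has_derivativeI_sandwich[of 1])
    show "bounded_linear (\<lambda>h. a x *\<^sub>R G h)"
      using G by (intro bounded_linear_intros)
  next
    fix y assume "y \<noteq> x"
    then have n: "norm (y - x) > 0" by simp
    have "a y *\<^sub>R g y - a x *\<^sub>R g x - a x *\<^sub>R G (y - x)
        = a x *\<^sub>R (g y - g x - G (y - x)) + (a y - a x) *\<^sub>R (g y - g x)"
      using g_zero by (simp add: algebra_simps)
    moreover have "norm (g y - g x) \<le> norm (g y - g x - G (y - x)) + norm (y - x) * K"
      using norm_triangle_ineq[of "g y - g x - G (y - x)" "G (y - x)"] K[of "y - x"] by simp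
    ultimately have "norm (a y *\<^sub>R g y - a x *\<^sub>R g x - a x *\<^sub>R G (y - x))
        \<le> \<bar>a x\<bar> * norm (g y - g x - G (y - x))
           + \<bar>a y - a x\<bar> * (norm (g y - g x - G (y - x)) + norm (y - x) * K)"
      by (auto intro!: order_trans[OF norm_triangle_ineq] add_mono mult_left_mono)
    also have "\<dots> = (\<bar>a x\<bar> * N y + \<bar>a y - a x\<bar> * (N y + K)) * norm (y - x)"
      using n by (simp add: N_def field_simps)
    finally show "norm (a y *\<^sub>R g y - a x *\<^sub>R g x - a x *\<^sub>R G (y - x)) / norm (y - x)
        \<le> \<bar>a x\<bar> * N y + \<bar>a y - a x\<bar> * (N y + K)"
      using n by (simp add: divide_le_eq)
  next
    have "((\<lambda>y. \<bar>a x\<bar> * N y + \<bar>a y - a x\<bar> * (N y + K)) \<longlongrightarrow> \<bar>a x\<bar> * 0 + \<bar>0\<bar> * (0 + K)) (at x)"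
      by (intro tendsto_intros N a_diff)
    then show "((\<lambda>y. \<bar>a x\<bar> * N y + \<bar>a y - a x\<bar> * (N y + K)) \<longlongrightarrow> 0) (at x)"
      by simp
  qed simp
qed

lemma orthonormal_inner_square_sum_le:
  fixes e :: "'b \<Rightarrow> 'a::real_inner"
  assumes "finite B"
    and orth: "\<And>b c. b \<in> B \<Longrightarrow> c \<in> B \<Longrightarrow> e b \<bullet> e c = (if b = c then 1 else 0)"
    and x_orth: "\<And>b. b \<in> B \<Longrightarrow> x \<bullet> e b = 0" and x_unit: "x \<bullet> x = 1"
  shows "(\<Sum>b\<in>B. (e b \<bullet> q)\<^sup>2) + (x \<bullet> q)\<^sup>2 \<le> q \<bullet> q"
proof -
  define S where "S = (\<Sum>b\<in>B. (e b \<bullet> q)\<^sup>2)"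
  define P where "P = (\<Sum>b\<in>B. (q \<bullet> e b) *\<^sub>R e b)"
  have Pe: "P \<bullet> e c = q \<bullet> e c" if "c \<in> B" for c
  proof -
    have "P \<bullet> e c = (\<Sum>b\<in>B. (q \<bullet> e b) * (if b = c then 1 else 0))"
      unfolding P_def inner_sum_left using orth that by (intro sum.cong) auto
    also have "\<dots> = q \<bullet> e c"
      using assms(1) that by (simp add: if_distrib sum.delta cong: if_cong)
    finally show ?thesis .
  qed
  have PP: "P \<bullet> P = S"
    unfolding S_def
    by (subst (1) P_def) (simp add: inner_sum_right Pe power2_eq_square inner_commute cong: sum.cong)
  have qP: "q \<bullet> P = S"
    unfolding P_def S_def inner_sum_right by (simp add: power2_eq_square inner_commute)
  have xP: "x \<bullet> P = 0"
    unfolding P_def inner_sum_right using x_orth by simp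
  have "0 \<le> (q - P - (q \<bullet> x) *\<^sub>R x) \<bullet> (q - P - (q \<bullet> x) *\<^sub>R x)"
    by simp
  also have "\<dots> = q \<bullet> q - S - (x \<bullet> q)\<^sup>2"
    using PP qP xP x_unit by (simp add: algebra_simps inner_commute power2_eq_square)
  finally show ?thesis
    unfolding S_def by simp
qed

lemma unit_vectors_eq_if_inner_eq_1:
  fixes x y :: "'a::real_inner"
  assumes "norm x = 1" "norm y = 1" "x \<bullet> y = 1"
  shows "x = y"
proof -
  have "(x - y) \<bullet> (x - y) = 0"
    using assms by (simp add: algebra_simps inner_commute norm_eq_1)
  then show ?thesis by simp
qed

context
  fixes U :: "'k::euclidean_space set" and f :: "'k \<Rightarrow> 'a::euclidean_space"
    and u :: 'k and L :: "'k \<Rightarrow> 'a"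
  assumes open_U: "open U" and sphere_valued: "\<And>y. y \<in> U \<Longrightarrow> norm (f y) = 1"
    and u_in_U: "u \<in> U" and f_derivative: "(f has_derivative L) (at u)"
begin

lemma sphere_point_orthogonal_derivative: "f u \<bullet> L w = 0"
proof -
  have "((\<lambda>y. f y \<bullet> f y) has_derivative (\<lambda>h. f u \<bullet> L h + L h \<bullet> f u)) (at u)"
    using has_derivative_inner[OF f_derivative f_derivative] .
  moreover have "((\<lambda>y. f y \<bullet> f y) has_derivative (\<lambda>h. 0)) (at u)"
    by (rule has_derivative_transform_within_open[OF has_derivative_const[of "1::real"] open_U u_in_U])
       (simp add: sphere_valued norm_eq_1[symmetric])
  ultimately have "(\<lambda>h. f u \<bullet> L h + L h \<bullet> f u) = (\<lambda>h. 0)"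
    by (rule has_derivative_unique)
  then have "f u \<bullet> L w + L w \<bullet> f u = 0"
    by metis
  then show ?thesis
    by (simp add: inner_commute)
qed

lemma div_Sigma_eq_sum:
  assumes "((X \<circ> f) has_derivative X') (at u)"
  shows "div_Sigma X f u v = (\<Sum>b\<in>Basis. X' (v b) \<bullet> L (v b))"
  using frechet_derivative_at[OF assms] frechet_derivative_at[OF f_derivative]
  unfolding div_Sigma_def by simp

lemma radial_has_derivative:
  "((\<lambda>y. (f y \<bullet> q) *\<^sub>R f y - q) has_derivative (\<lambda>h. (L h \<bullet> q) *\<^sub>R f u + (f u \<bullet> q) *\<^sub>R L h)) (at u)"
  using has_derivative_inner_left[OF f_derivative, of q] f_derivative
  by (auto intro!: derivative_eq_intros simp: algebra_simps)

context
  fixes q :: 'a and v :: "'k \<Rightarrow> 'k"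
  assumes q_unit: "norm q = 1" and frame: "tangent_onb L v"
begin

lemma abs_inner_le_1: "y \<in> U \<Longrightarrow> \<bar>f y \<bullet> q\<bar> \<le> 1"
  using Cauchy_Schwarz_ineq2[of "f y" q] sphere_valued q_unit by simp

lemma frame_inner_radial_derivative:
  assumes "b \<in> Basis"
  shows "((L (v b) \<bullet> q) *\<^sub>R f u + (f u \<bullet> q) *\<^sub>R L (v b)) \<bullet> L (v b) = f u \<bullet> q"
  using frame assms sphere_point_orthogonal_derivative[of "v b"]
  unfolding tangent_onb_def by (simp add: algebra_simps)

lemma frame_inner_square_sum_le: "(\<Sum>b\<in>Basis. (L (v b) \<bullet> q)\<^sup>2) \<le> 1 - (f u \<bullet> q)\<^sup>2"
  using orthonormal_inner_square_sum_le[of Basis "\<lambda>b. L (v b)" "f u" q] frame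
    sphere_point_orthogonal_derivative sphere_valued[OF u_in_U] q_unit
  unfolding tangent_onb_def by (simp add: norm_eq_1)

lemma div_Phi_at_pole:
  assumes "f u = q"
  shows "div_Sigma (Phi DIM('k) q) f u v = 1"
proof -
  define a where "a y = Phi_profile_ext DIM('k) (f y \<bullet> q)" for y
  have "continuous (at u within U) (\<lambda>y. f y \<bullet> q)"
    using has_derivative_continuous[OF has_derivative_inner_left[OF f_derivative]]
    by (rule continuous_at_imp_continuous_at_within)
  moreover have "(\<lambda>y. f y \<bullet> q) ` U \<subseteq> {-1..1}"
    using abs_inner_le_1 by (auto simp: abs_le_iff)
  then have "continuous (at (f u \<bullet> q) within (\<lambda>y. f y \<bullet> q) ` U) (Phi_profile_ext DIM('k))"
    using continuous_within_subset[OF continuous_Phi_profile_ext] assms q_unit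
    by (simp add: norm_eq_1 Suc_le_eq)
  ultimately have "continuous (at u within U) a"
    unfolding a_def using continuous_within_compose2 by blast
  txt \<open>Phi_profile_ext is only known to be continuous at the pole, but the radial factor
    vanishes there.\<close>
  then have "((\<lambda>y. a y *\<^sub>R ((f y \<bullet> q) *\<^sub>R f y - q)) has_derivative
               (\<lambda>h. a u *\<^sub>R ((L h \<bullet> q) *\<^sub>R f u + (f u \<bullet> q) *\<^sub>R L h))) (at u)"
    using assms q_unit
    by (intro has_derivative_scaleR_vanishing radial_has_derivative)
       (auto simp: at_within_open[OF u_in_U open_U] norm_eq_1)
  then have "((Phi DIM('k) q \<circ> f) has_derivative
               (\<lambda>h. a u *\<^sub>R ((L h \<bullet> q) *\<^sub>R f u + (f u \<bullet> q) *\<^sub>R L h))) (at u)"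
  proof (rule has_derivative_transform_within_open[OF _ open_U u_in_U])
    fix y assume "y \<in> U"
    then show "a y *\<^sub>R ((f y \<bullet> q) *\<^sub>R f y - q) = (Phi DIM('k) q \<circ> f) y"
      using unit_vectors_eq_if_inner_eq_1[of "f y" q] sphere_valued q_unit
      by (auto simp: a_def Phi_profile_ext_def Phi_eq_Phi_profile)
  qed
  moreover have "a u = 1 / DIM('k)"
    using assms q_unit by (simp add: a_def Phi_profile_ext_def norm_eq_1)
  ultimately have "div_Sigma (Phi DIM('k) q) f u v = (\<Sum>b\<in>(Basis::'k set). 1 / real DIM('k))"
    using frame_inner_radial_derivative assms q_unit
    by (simp add: div_Sigma_eq_sum norm_eq_1)
  then show ?thesis
    by simp
qed

lemma div_Phi_off_poles:
  assumes "-1 < f u \<bullet> q" "f u \<bullet> q < 1"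
  shows "div_Sigma (Phi DIM('k) q) f u v
    = real DIM('k) * Phi_profile DIM('k) (f u \<bullet> q) * (f u \<bullet> q)
      - deriv (Phi_profile DIM('k)) (f u \<bullet> q) * (\<Sum>b\<in>Basis. (L (v b) \<bullet> q)\<^sup>2)"
proof -
  define k where "k = DIM('k)"
  define c where "c = f u \<bullet> q"
  define D where "D = deriv (Phi_profile k) c"
  have k: "k \<ge> 1"
    unfolding k_def using DIM_positive by (simp add: Suc_le_eq)
  have "(Phi_profile k has_real_derivative D) (at c)"
    using Phi_profile_has_derivative[OF k assms[folded c_def]]
    unfolding D_def by (simp add: DERIV_imp_deriv)
  then have "((\<lambda>y. Phi_profile k (f y \<bullet> q)) has_derivative (\<lambda>h. D * (L h \<bullet> q))) (at u)"
    using has_derivative_compose[OF has_derivative_inner_left[OF f_derivative]]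
    unfolding has_field_derivative_def c_def by blast
  then have "((Phi k q \<circ> f) has_derivative
      (\<lambda>h. Phi_profile k c *\<^sub>R ((L h \<bullet> q) *\<^sub>R f u + c *\<^sub>R L h)
        + (D * (L h \<bullet> q)) *\<^sub>R (c *\<^sub>R f u - q))) (at u)"
    unfolding comp_def Phi_eq_Phi_profile c_def
    by (intro has_derivative_scaleR radial_has_derivative)
  then have "div_Sigma (Phi k q) f u v = (\<Sum>b\<in>Basis.
      (Phi_profile k c *\<^sub>R ((L (v b) \<bullet> q) *\<^sub>R f u + c *\<^sub>R L (v b))
        + (D * (L (v b) \<bullet> q)) *\<^sub>R (c *\<^sub>R f u - q)) \<bullet> L (v b))"
    unfolding k_def by (rule div_Sigma_eq_sum)
  also have "\<dots> = (\<Sum>b\<in>Basis. Phi_profile k c * c - D * (L (v b) \<bullet> q)\<^sup>2)"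
  proof (rule sum.cong)
    fix b :: 'k assume "b \<in> Basis"
    moreover have "(c *\<^sub>R f u - q) \<bullet> L (v b) = - (L (v b) \<bullet> q)"
      using sphere_point_orthogonal_derivative[of "v b"] by (simp add: inner_diff_left inner_commute[of q])
    ultimately show "(Phi_profile k c *\<^sub>R ((L (v b) \<bullet> q) *\<^sub>R f u + c *\<^sub>R L (v b))
        + (D * (L (v b) \<bullet> q)) *\<^sub>R (c *\<^sub>R f u - q)) \<bullet> L (v b)
        = Phi_profile k c * c - D * (L (v b) \<bullet> q)\<^sup>2"
      using frame_inner_radial_derivative unfolding c_def
      by (simp only: inner_add_left inner_scaleR_left) (simp add: power2_eq_square)
  qed simp
  finally show ?thesis
    unfolding k_def c_def D_def by (simp add: sum_subtractf sum_distrib_left)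
qed

lemma div_Phi_le_1_off_poles:
  assumes "-1 < f u \<bullet> q" "f u \<bullet> q < 1"
  shows "div_Sigma (Phi DIM('k) q) f u v \<le> 1"
proof -
  define k where "k = DIM('k)"
  define c where "c = f u \<bullet> q"
  define A where "A = real k * Phi_profile k c * c"
  define S where "S = (\<Sum>b\<in>Basis. (L (v b) \<bullet> q)\<^sup>2)"
  have k: "k \<ge> 1"
    unfolding k_def using DIM_positive by (simp add: Suc_le_eq)
  have c: "-1 < c" "c < 1" "0 < 1 - c\<^sup>2"
    using assms unfolding c_def by (auto simp: abs_square_less_1)
  have "div_Sigma (Phi k q) f u v = A - (A - 1) / (1 - c\<^sup>2) * S"
    using div_Phi_off_poles[OF assms] DERIV_imp_deriv[OF Phi_profile_has_derivative[OF k c(1,2)]]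
    unfolding k_def c_def A_def S_def by simp
  also have "\<dots> = A + (1 - A) * (S / (1 - c\<^sup>2))"
    using c by (simp add: field_simps)
  also have "\<dots> \<le> A + (1 - A) * 1"
    using frame_inner_square_sum_le Phi_profile_mult_le[OF k c(1,2)] c
    unfolding S_def A_def c_def by (intro add_left_mono mult_left_mono) auto
  finally show ?thesis
    unfolding k_def by simp
qed

lemma div_Phi_le_1:
  assumes "f u \<noteq> - q"
  shows "div_Sigma (Phi DIM('k) q) f u v \<le> 1"
proof (cases "f u = q")
  case True
  then show ?thesis
    using div_Phi_at_pole by simp
next
  case False
  have "f u \<bullet> q \<noteq> 1" "f u \<bullet> - q \<noteq> 1"
    using unit_vectors_eq_if_inner_eq_1[of "f u"] False assms sphere_valued[OF u_in_U] q_unit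
    by auto
  then show ?thesis
    using abs_inner_le_1[OF u_in_U] by (intro div_Phi_le_1_off_poles) auto
qed

end

end

lemma Psi_eq_psi_k:
  fixes p x :: "'a::euclidean_space"
  assumes p: "norm p = 1" and x: "norm x = 1" "x \<noteq> p"
  shows "Psi k p x = psi_k k (sdist p x) *\<^sub>R grad_sdist p x"
proof -
  define t where "t = x \<bullet> p"
  have t: "\<bar>t\<bar> \<le> 1" "t \<noteq> 1"
    using Cauchy_Schwarz_ineq2[of x p] unit_vectors_eq_if_inner_eq_1[of x p] assms
    unfolding t_def by auto
  show ?thesis
  proof (cases "t = -1")
    case True
    then show ?thesis
      unfolding Psi_def Phi_def psi_k_def grad_sdist_def sdist_def phi_k_def t_def by simp
  next
    case False
    define d where "d = arccos t"
    have d: "0 < d" "d < pi"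
      using t False arccos_lt_bounded unfolding d_def by auto
    have arccos_minus_t: "arccos (- t) = pi - d"
      using t unfolding d_def by (simp add: arccos_minus abs_le_iff)
    have "sin d > 0"
      using d by (intro sin_gt_zero) auto
    then show ?thesis
      unfolding Psi_def Phi_def psi_k_def grad_sdist_def sdist_def phi_k_def
      using d by (simp add: t_def[symmetric] d_def[symmetric] arccos_minus_t I_k_pi_minus
          algebra_simps diff_divide_distrib)
  qed
qed

lemma a_coef_Suc:
  "1 \<le> i \<Longrightarrow> a_coef j (Suc i) = 2 * (real j - real i) / (2 * real j - real (Suc i)) * a_coef j i"
  by (cases i) auto

definition psi_poly :: "nat \<Rightarrow> real \<Rightarrow> real" where
  "psi_poly j c = (\<Sum>i=1..j. a_coef j i * ((1 + c) ^ j * (1 - c) ^ (j - i)))"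

text \<open>The recursion defining a_coef is exactly what makes the derivative of the i-th summand
  of psi_poly telescope.\<close>
lemma psi_poly_summand_derivative_telescopes:
  fixes c :: real
  assumes j: "j = Suc n" and i: "1 \<le> i" "i \<le> j"
  defines "T \<equiv> \<lambda>i. if i \<le> j
    then a_coef j i * (2 * real j - real i) * (1 + c) ^ n * (1 - c) ^ (j - i) else 0"
  shows "a_coef j i * (real j * (1 + c) ^ (j - 1) * (1 - c) ^ (j - i)
           - (1 + c) ^ j * (real (j - i) * (1 - c) ^ (j - i - 1)))
         = T i - T (Suc i)"
proof (cases "i = j")
  case True
  then show ?thesis
    unfolding T_def using j by (simp add: algebra_simps)
next
  case False
  then obtain m where m: "j - i = Suc m"
    using i by (metis Suc_diff_Suc le_neq_implies_less)
  have "2 * real j - real (Suc i) \<noteq> 0"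
    using i False by simp
  then have "T (Suc i) = 2 * (real j - real i) * a_coef j i * (1 + c) ^ n * (1 - c) ^ m"
    unfolding T_def a_coef_Suc[OF i(1)] using i m False by (simp add: Suc_diff_Suc[symmetric] field_simps)
  moreover have "T i = a_coef j i * (2 * real j - real i) * (1 + c) ^ n * (1 - c) ^ Suc m"
    unfolding T_def using i m by simp
  moreover have "real n = real i + real m"
    using j m i by linarith
  ultimately show ?thesis
    unfolding m using j by (simp add: algebra_simps)
qed

lemma psi_poly_has_derivative:
  assumes "j \<ge> 1"
  shows "(psi_poly j has_real_derivative (1 - c\<^sup>2) ^ (j - 1)) (at c)"
proof -
  obtain n where jn: "j = Suc n"
    using assms by (cases j) auto
  define T where "T \<equiv> \<lambda>i. if i \<le> j
    then a_coef j i * (2 * real j - real i) * (1 + c) ^ n * (1 - c) ^ (j - i) else 0"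
  have "(psi_poly j has_real_derivative
     (\<Sum>i=1..j. a_coef j i * (real j * (1 + c) ^ (j - 1) * (1 - c) ^ (j - i)
        - (1 + c) ^ j * (real (j - i) * (1 - c) ^ (j - i - 1))))) (at c)"
    unfolding psi_poly_def[abs_def]
    by (rule derivative_eq_intros refl | simp add: algebra_simps)+
  also have "(\<Sum>i=1..j. a_coef j i * (real j * (1 + c) ^ (j - 1) * (1 - c) ^ (j - i)
        - (1 + c) ^ j * (real (j - i) * (1 - c) ^ (j - i - 1)))) = (\<Sum>i=1..j. T i - T (Suc i))"
    using psi_poly_summand_derivative_telescopes[OF jn, of _ c] unfolding T_def by (intro sum.cong) auto
  also have "\<dots> = T 1 - T (Suc j)"
    using sum_Suc_diff[of 1 j "\<lambda>i. - T i"] assms by simp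
  also have "\<dots> = (1 - c\<^sup>2) ^ (j - 1)"
    unfolding T_def using jn by (simp add: power_mult_distrib[symmetric] power2_eq_square algebra_simps)
  finally show ?thesis .
qed

lemma I_k_even_eq_psi_poly:
  assumes "j \<ge> 1" "0 < r" "r < pi"
  shows "I_k (2 * j) r - I_k (2 * j) pi = - psi_poly j (cos r)"
proof -
  define F where "F x = I_k (2 * j) x + psi_poly j (cos x)" for x
  have F_deriv: "(F has_real_derivative 0) (at x)" if "0 < x" for x
  proof -
    have "(F has_real_derivative sin x ^ (2 * j - 1) + (1 - (cos x)\<^sup>2) ^ (j - 1) * - sin x) (at x)"
      unfolding F_def[abs_def] using that
      by (intro DERIV_add DERIV_chain2[OF psi_poly_has_derivative] I_k_has_real_derivative DERIV_cos assms(1))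
    moreover have "2 * j - 1 = Suc (2 * (j - 1))"
      using assms(1) by simp
    then have "sin x ^ (2 * j - 1) = (1 - (cos x)\<^sup>2) ^ (j - 1) * sin x"
      by (simp add: sin_squared_eq[symmetric] power_mult mult.commute)
    ultimately show ?thesis by simp
  qed
  have "F pi = F r"
    using assms(2,3)
    by (intro DERIV_isconst_end[of r pi F] continuous_at_imp_continuous_on ballI F_deriv)
       (auto intro!: DERIV_isCont[OF F_deriv])
  moreover have "psi_poly j (-1) = 0"
    using assms(1) unfolding psi_poly_def by (simp add: zero_power)
  ultimately show ?thesis
    unfolding F_def by simp
qed

lemma psi_k_even:
  assumes "j \<ge> 1" "0 < r" "r < pi"
  shows "psi_k (2 * j) r = (\<Sum>i=1..j. - a_coef j i * sin r / (1 - cos r) ^ i)"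
proof -
  have s: "sin r > 0"
    using assms by (intro sin_gt_zero) auto
  have c: "1 - cos r > 0"
    using assms cos_monotone_0_pi[of 0 r] by simp
  have summand: "(1 + cos r) ^ j * (1 - cos r) ^ (j - i) = sin r ^ (2 * j - 1) * sin r / (1 - cos r) ^ i"
    if "i \<le> j" for i
  proof -
    have "(1 + cos r) ^ j * (1 - cos r) ^ (j - i) * (1 - cos r) ^ i = ((1 + cos r) * (1 - cos r)) ^ j"
      using that by (simp add: mult.assoc power_add[symmetric] power_mult_distrib)
    also have "(1 + cos r) * (1 - cos r) = sin r ^ 2"
      by (simp add: sin_squared_eq algebra_simps power2_eq_square)
    also have "(sin r ^ 2) ^ j = sin r ^ (2 * j - 1) * sin r"
      using assms(1) by (simp add: power_mult[symmetric] power_Suc2[symmetric])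
    finally show ?thesis
      using c by (simp add: field_simps)
  qed
  have "psi_k (2 * j) r = - psi_poly j (cos r) / sin r ^ (2 * j - 1)"
    unfolding psi_k_def I_k_even_eq_psi_poly[OF assms] by simp
  also have "\<dots> = (\<Sum>i=1..j.
      - a_coef j i * ((1 + cos r) ^ j * (1 - cos r) ^ (j - i)) / sin r ^ (2 * j - 1))"
    unfolding psi_poly_def by (simp add: sum_divide_distrib sum_negf)
  also have "\<dots> = (\<Sum>i=1..j. - a_coef j i * sin r / (1 - cos r) ^ i)"
    using s by (intro sum.cong refl) (simp add: summand)
  finally show ?thesis .
qed

theorem lemma2p5:
  fixes p :: "'a::euclidean_space"
    and U :: "'k::euclidean_space set"
    and f :: "'k \<Rightarrow> 'a"
  assumes "DIM('k) \<ge> 2"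
    and "norm p = 1"
    and "minimal_immersion U f"
  shows "(\<forall>u\<in>U. \<forall>v. tangent_onb (frechet_derivative f (at u)) v \<longrightarrow>
            (f u \<noteq> - p \<longrightarrow> div_Sigma (Phi DIM('k) p) f u v \<le> 1) \<and>
            (f u \<noteq> p \<longrightarrow> div_Sigma (Psi DIM('k) p) f u v \<le> 1))
       \<and> (\<forall>x::'a. norm x = 1 \<and> x \<noteq> p \<longrightarrow>
            Psi DIM('k) p x = psi_k DIM('k) (sdist p x) *\<^sub>R grad_sdist p x)
       \<and> (\<forall>j. DIM('k) = 2 * j \<longrightarrow>
            (\<forall>r. 0 < r \<and> r < pi \<longrightarrow>
               psi_k DIM('k) r = (\<Sum>i=1..j. - a_coef j i * sin r / (1 - cos r) ^ i)))"
proof (intro conjI ballI allI impI)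
  fix u v assume u: "u \<in> U" and frame: "tangent_onb (frechet_derivative f (at u)) v"
  obtain Df where "open U" "\<And>y. y \<in> U \<Longrightarrow> norm (f y) = 1"
    and "(f has_derivative blinfun_apply (Df u)) (at u)"
    using assms(3) u unfolding minimal_immersion_def by blast
  moreover from this(3) have "tangent_onb (blinfun_apply (Df u)) v"
    using frame frechet_derivative_at by metis
  ultimately show "f u \<noteq> - p \<Longrightarrow> div_Sigma (Phi DIM('k) p) f u v \<le> 1"
    and "f u \<noteq> p \<Longrightarrow> div_Sigma (Psi DIM('k) p) f u v \<le> 1"
    using div_Phi_le_1[of U f u _ p v] div_Phi_le_1[of U f u _ "- p" v] assms(2) u
    unfolding Psi_def by auto
next
  fix x :: 'a assume "norm x = 1 \<and> x \<noteq> p"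
  then show "Psi DIM('k) p x = psi_k DIM('k) (sdist p x) *\<^sub>R grad_sdist p x"
    using Psi_eq_psi_k assms(2) by blast
next
  fix j :: nat and r :: real assume "DIM('k) = 2 * j" and "0 < r \<and> r < pi"
  then show "psi_k DIM('k) r = (\<Sum>i=1..j. - a_coef j i * sin r / (1 - cos r) ^ i)"
    using psi_k_even[of j r] DIM_positive[where 'a = 'k] by simp
qed

end
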